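(* Let $q$ be a prime power, let $\lambda \in \mathbb{F}_{q^n}\setminus\mathbb{F}_q$, $t = [\mathbb{F}_q(\lambda):\mathbb{F}_q]$, let $0 < m < t$, let $\overline{S}$ be an $\mathbb{F}_{q^t}$-subspace of $\mathbb{F}_{q^n}$ of $\mathbb{F}_{q^t}$-dimension $l>0$ with $\overline{S} \cap \mathbb{F}_{q^t} = \{0\}$, and let $S = \overline{S} \oplus \langle 1, \lambda, \ldots, \lambda^{m-1}\rangle_{\mathbb{F}_q}$. If $b \in \mathbb{F}_{q^t}^*$, then \[ S \cap bS = \overline{S} \oplus \left(\langle 1, \lambda, \ldots, \lambda^{m-1}\rangle_{\mathbb{F}_q} \cap b\langle 1, \lambda, \ldots, \lambda^{m-1}\rangle_{\mathbb{F}_q}\right). \] *)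

theory Defs
  imports "HOL-Number_Theory.Prime_Powers"
begin

definition is_subfield :: "'a::field set \<Rightarrow> bool" where
  "is_subfield F \<longleftrightarrow> 0 \<in> F \<and> 1 \<in> F \<and>
     (\<forall>x\<in>F. \<forall>y\<in>F. x + y \<in> F \<and> x * y \<in> F) \<and>
     (\<forall>x\<in>F. - x \<in> F \<and> inverse x \<in> F)"

definition field_adjoin :: "'a::field set \<Rightarrow> 'a \<Rightarrow> 'a set" where
  "field_adjoin K a = \<Inter>{F. is_subfield F \<and> K \<subseteq> F \<and> a \<in> F}"

definition is_subspace_over :: "'a::field set \<Rightarrow> 'a set \<Rightarrow> bool" where
  "is_subspace_over F V \<longleftrightarrow> 0 \<in> V \<and>
     (\<forall>x\<in>V. \<forall>y\<in>V. x + y \<in> V) \<and> (\<forall>c\<in>F. \<forall>x\<in>V. c * x \<in> V)"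

definition pow_span :: "'a::field set \<Rightarrow> 'a \<Rightarrow> nat \<Rightarrow> 'a set" where
  "pow_span K a m = {(\<Sum>i<m. c i * a ^ i) | c. \<forall>i<m. c i \<in> K}"

definition sumset :: "'a::plus set \<Rightarrow> 'a set \<Rightarrow> 'a set" where
  "sumset A B = {a + b | a b. a \<in> A \<and> b \<in> B}"

end

theory Submission
  imports Defs
begin

text \<open>Since \<open>Sbar \<inter> F = {0}\<close> for \<open>F = K(lam)\<close> and the powers of \<open>lam\<close> span a subset
  \<open>P\<close> of \<open>F\<close>, every element of \<open>Sbar + P\<close> has unique components in \<open>Sbar\<close> and \<open>F\<close>.
  Multiplication by \<open>b \<in> F - {0}\<close> maps \<open>Sbar\<close> and \<open>F\<close> onto themselves, so comparing
  components in \<open>s + p = b * (s' + p')\<close> gives \<open>s = b * s'\<close> and \<open>p = b * p'\<close>.\<close>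

lemma field_adjoin_is_subfield: "is_subfield (field_adjoin K a)"
  unfolding field_adjoin_def is_subfield_def by (intro conjI ballI; simp)

lemma subset_field_adjoin: "K \<subseteq> field_adjoin K a"
  unfolding field_adjoin_def by blast

lemma mem_field_adjoin: "a \<in> field_adjoin K a"
  unfolding field_adjoin_def by blast

lemma subfield_power_closed: "is_subfield F \<Longrightarrow> a \<in> F \<Longrightarrow> a ^ i \<in> F"
  by (induction i) (simp_all add: is_subfield_def)

lemma subfield_diff_closed: "is_subfield F \<Longrightarrow> x \<in> F \<Longrightarrow> y \<in> F \<Longrightarrow> x - y \<in> F"
  unfolding is_subfield_def diff_conv_add_uminus by blast

lemma subfield_sum_closed: "is_subfield F \<Longrightarrow> (\<And>i. i \<in> A \<Longrightarrow> f i \<in> F) \<Longrightarrow> sum f A \<in> F"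
  by (induction A rule: infinite_finite_induct) (simp_all add: is_subfield_def)

lemma zero_in_pow_span: "is_subfield K \<Longrightarrow> 0 \<in> pow_span K a m"
  unfolding pow_span_def is_subfield_def by (auto intro: exI[of _ "\<lambda>_. 0"])

lemma pow_span_subset_subfield:
  assumes "is_subfield F" and "K \<subseteq> F" and "a \<in> F"
  shows "pow_span K a m \<subseteq> F"
proof
  fix x assume "x \<in> pow_span K a m"
  then obtain c where x: "x = (\<Sum>i<m. c i * a ^ i)" and c: "\<forall>i<m. c i \<in> K"
    unfolding pow_span_def by blast
  have "c i * a ^ i \<in> F" if "i < m" for i
    using assms c that subfield_power_closed[OF assms(1,3)] by (auto simp: is_subfield_def)
  then show "x \<in> F"
    unfolding x by (auto intro: subfield_sum_closed[OF assms(1)])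
qed

lemma subspace_over_diff:
  assumes "is_subfield F" and "is_subspace_over F V" and "x \<in> V" and "y \<in> V"
  shows "x - y \<in> V"
proof -
  have "- 1 \<in> F"
    using assms(1) unfolding is_subfield_def by blast
  then have "(- 1) * y \<in> V"
    using assms(2,4) unfolding is_subspace_over_def by blast
  then have "- y \<in> V"
    by simp
  then have "x + - y \<in> V"
    using assms(2,3) unfolding is_subspace_over_def by blast
  then show ?thesis
    by simp
qed

lemma direct_sum_components_unique:
  assumes "is_subfield F" and "is_subspace_over F V" and "V \<inter> F = {0}"
    and "v \<in> V" and "v' \<in> V" and "c \<in> F" and "c' \<in> F" and "v + c = v' + c'"
  shows "v = v'" and "c = c'"
proof -
  have diff: "v - v' = c' - c"
    using assms(8) by (simp add: algebra_simps)
  have "v - v' \<in> F"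
    unfolding diff by (rule subfield_diff_closed[OF assms(1,7,6)])
  moreover have "v - v' \<in> V"
    by (rule subspace_over_diff[OF assms(1,2,4,5)])
  ultimately have "v - v' \<in> {0}"
    using assms(3) by (metis IntI)
  then show "v = v'" and "c = c'"
    using assms(8) by simp_all
qed

lemma sumset_inter_scaled_sumset:
  assumes "is_subfield F" and "is_subspace_over F V" and "V \<inter> F = {0}"
    and "P \<subseteq> F" and "b \<in> F" and "b \<noteq> 0"
  shows "sumset V P \<inter> (\<lambda>x. b * x) ` sumset V P = sumset V (P \<inter> (\<lambda>x. b * x) ` P)"
proof (intro equalityI subsetI)
  fix x assume "x \<in> sumset V P \<inter> (\<lambda>x. b * x) ` sumset V P"
  then obtain v p v' p' where v: "v \<in> V" and p: "p \<in> P" and "v' \<in> V" and p': "p' \<in> P"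
    and x: "x = v + p" and x': "x = b * (v' + p')"
    unfolding sumset_def by blast
  have "b * v' \<in> V" and "b * p' \<in> F"
    using assms(1,2,4,5) \<open>v' \<in> V\<close> p' by (auto simp: is_subspace_over_def is_subfield_def)
  moreover have "v + p = b * v' + b * p'"
    using x x' by (simp add: distrib_left)
  ultimately have "p = b * p'"
    using direct_sum_components_unique(2)[OF assms(1-3) v] p assms(4) by blast
  then show "x \<in> sumset V (P \<inter> (\<lambda>x. b * x) ` P)"
    unfolding sumset_def using x v p p' by blast
next
  fix x assume "x \<in> sumset V (P \<inter> (\<lambda>x. b * x) ` P)"
  then obtain v p' where v: "v \<in> V" and p': "p' \<in> P" and bp': "b * p' \<in> P"
    and x: "x = v + b * p'"
    unfolding sumset_def by blast
  have "inverse b * v \<in> V"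
    using assms(1,2,5) v by (simp add: is_subspace_over_def is_subfield_def)
  moreover have "x = b * (inverse b * v + p')"
    using x assms(6) by (simp add: algebra_simps)
  ultimately show "x \<in> sumset V P \<inter> (\<lambda>x. b * x) ` sumset V P"
    unfolding sumset_def using x v p' bp' by blast
qed

theorem lemma4p4:
  fixes K Sbar :: "'a::{field, finite} set"
    and lam b :: 'a and q n t m l :: nat
  assumes "primepow q"
    and "is_subfield K" and "card K = q" and "card (UNIV :: 'a set) = q ^ n"
    and "lam \<notin> K"
    and "card (field_adjoin K lam) = q ^ t"
    and "0 < m" and "m < t"
    and "is_subspace_over (field_adjoin K lam) Sbar"
    and "card Sbar = card (field_adjoin K lam) ^ l" and "l > 0"
    and "Sbar \<inter> field_adjoin K lam = {0}"
    and "b \<in> field_adjoin K lam" and "b \<noteq> 0"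
  shows "sumset Sbar (pow_span K lam m) \<inter> (\<lambda>x. b * x) ` sumset Sbar (pow_span K lam m)
           = sumset Sbar (pow_span K lam m \<inter> (\<lambda>x. b * x) ` pow_span K lam m)
         \<and> Sbar \<inter> (pow_span K lam m \<inter> (\<lambda>x. b * x) ` pow_span K lam m) = {0}"
proof
  let ?P = "pow_span K lam m"
  have P_sub: "?P \<subseteq> field_adjoin K lam"
    by (intro pow_span_subset_subfield field_adjoin_is_subfield subset_field_adjoin mem_field_adjoin)
  show "sumset Sbar ?P \<inter> (\<lambda>x. b * x) ` sumset Sbar ?P = sumset Sbar (?P \<inter> (\<lambda>x. b * x) ` ?P)"
    using sumset_inter_scaled_sumset[OF field_adjoin_is_subfield assms(9,12) P_sub assms(13,14)] .
  have "0 \<in> Sbar" and "0 \<in> ?P"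
    using assms(9) zero_in_pow_span[OF assms(2)] by (simp_all add: is_subspace_over_def)
  then have "0 \<in> Sbar \<inter> (?P \<inter> (\<lambda>x. b * x) ` ?P)"
    by (auto intro: image_eqI[where x = 0])
  then show "Sbar \<inter> (?P \<inter> (\<lambda>x. b * x) ` ?P) = {0}"
    using assms(12) P_sub by blast
qed

end
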